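(* Let $\Sigma$ be an alphabet with $|\Sigma|\ge 3$ and $f\colon\Sigma^*\to\Sigma^*$ RCP. If there are letters $a,b\in\Sigma$ with $a\neq b$ and $f(a)\in b\Sigma^*$, then $f(x)\in b\Sigma^*$ for all $x\in\Sigma^*$.
   Context: $\Sigma^*$ is the free monoid over $\Sigma$ (finite words, concatenation, empty word $\varepsilon$). For a word $w$, $w\Sigma^*$ denotes the set of words having $w$ as a prefix. A function $f\colon(\Sigma^* )^k\to\Sigma^*$ is RCP if for every monoid morphism $\varphi\colon\Sigma^*\to\Sigma^*$ and all $u_1,\ldots,u_k,v_1,\ldots,v_k$ with $\varphi(u_i)=\varphi(v_i)$ for all $i$, we have $\varphi(f(u_1,\ldots,u_k))=\varphi(f(v_1,\ldots,v_k))$. *)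

theory Defs
  imports Main
begin

text \<open>A monoid morphism phi from Sigma* to Sigma* is determined by the images of letters:
phi = concat o map h with h letter images in Sigma*.\<close>

definition morph :: "('a \<Rightarrow> 'a list) \<Rightarrow> 'a list \<Rightarrow> 'a list" where
  "morph h w = concat (map h w)"

definition is_morphism_on :: "'a set \<Rightarrow> ('a \<Rightarrow> 'a list) \<Rightarrow> bool" where
  "is_morphism_on \<Sigma> h \<longleftrightarrow> (\<forall>c\<in>\<Sigma>. h c \<in> lists \<Sigma>)"

definition RCP1 :: "'a set \<Rightarrow> ('a list \<Rightarrow> 'a list) \<Rightarrow> bool" where
  "RCP1 \<Sigma> f \<longleftrightarrow>
     (\<forall>h u v. is_morphism_on \<Sigma> h \<longrightarrow> u \<in> lists \<Sigma> \<longrightarrow> v \<in> lists \<Sigma> \<longrightarrow>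
        morph h u = morph h v \<longrightarrow> morph h (f u) = morph h (f v))"

end

theory Submission
  imports Defs
begin

text \<open>A morphism that replaces a single letter p by a word and fixes every other letter
preserves the first letter of any word not starting with p. Hence, by RCP, if u and v have
the same image and f u starts with some b \<noteq> p, then f v starts with b or with p. Taking
two letters a, c distinct from b (possible as |\<Sigma>| \<ge> 3) leaves only b. For single letters
this is applied with u = [a], v = [c]; for longer words, by induction on the length, with
p erased (if p occurs in x) or with p replaced by x (if it does not).\<close>

definition letter_subst :: "'a \<Rightarrow> 'a list \<Rightarrow> 'a \<Rightarrow> 'a list" where
  "letter_subst p w = (\<lambda>z. if z = p then w else [z])"

lemma morph_Nil [simp]: "morph h [] = []"
  by (simp add: morph_def)

lemma morph_Cons [simp]: "morph h (z # t) = h z @ morph h t"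
  by (simp add: morph_def)

lemma is_morphism_on_letter_subst:
  "w \<in> lists \<Sigma> \<Longrightarrow> is_morphism_on \<Sigma> (letter_subst p w)"
  by (simp add: is_morphism_on_def letter_subst_def)

lemma morph_letter_subst_notin: "p \<notin> set x \<Longrightarrow> morph (letter_subst p w) x = x"
  by (induction x) (auto simp: letter_subst_def)

lemma morph_letter_subst_Nil: "morph (letter_subst p []) x = filter (\<lambda>z. z \<noteq> p) x"
  by (induction x) (auto simp: letter_subst_def)

lemma RCP1_head_after_letter_subst:
  assumes "RCP1 \<Sigma> f" and "w \<in> lists \<Sigma>" and "u \<in> lists \<Sigma>" and "v \<in> lists \<Sigma>"
    and "morph (letter_subst p w) u = morph (letter_subst p w) v"
    and "f u = b # s" and "b \<noteq> p"
  shows "\<exists>t. f v = b # t \<or> f v = p # t"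
proof -
  let ?h = "letter_subst p w"
  have "morph ?h (f v) = morph ?h (f u)"
    using assms(1-5) is_morphism_on_letter_subst unfolding RCP1_def by metis
  also have "\<dots> = b # morph ?h s"
    using assms(6,7) by (simp add: letter_subst_def)
  finally show ?thesis
    by (cases "f v") (auto simp: letter_subst_def split: if_splits)
qed

lemma RCP1_head_of_letter:
  assumes "RCP1 \<Sigma> f" and "a \<in> \<Sigma>" and "c \<in> \<Sigma>"
    and "a \<noteq> b" and "c \<noteq> a" and "c \<noteq> b" and "f [a] = b # s"
  shows "\<exists>t. f [c] = b # t"
proof -
  have "morph (letter_subst a [c]) [a] = morph (letter_subst a [c]) [c]"
       "morph (letter_subst c [a]) [a] = morph (letter_subst c [a]) [c]"
    using assms(5) by (auto simp: letter_subst_def)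
  then have "\<exists>t. f [c] = b # t \<or> f [c] = a # t" "\<exists>t. f [c] = b # t \<or> f [c] = c # t"
    using RCP1_head_after_letter_subst[OF assms(1)] assms by (metis lists.simps)+
  then show ?thesis
    using assms(5) by auto
qed

lemma RCP1_head_of_word_step:
  assumes "RCP1 \<Sigma> f" and "p \<in> \<Sigma>" and "x \<in> lists \<Sigma>"
    and "b \<noteq> p" and "f [p] = b # s"
    and shorter: "\<And>y. y \<in> lists \<Sigma> \<Longrightarrow> length y < length x \<Longrightarrow> \<exists>t. f y = b # t"
  shows "\<exists>t. f x = b # t \<or> f x = p # t"
proof (cases "p \<in> set x")
  case True
  let ?y = "filter (\<lambda>z. z \<noteq> p) x"
  have "?y \<in> lists \<Sigma>" "length ?y < length x"
    using assms(3) True by (auto simp: length_filter_less)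
  then obtain t where "f ?y = b # t"
    using shorter by blast
  moreover have "morph (letter_subst p []) ?y = morph (letter_subst p []) x"
    by (simp add: morph_letter_subst_Nil)
  ultimately show ?thesis
    using RCP1_head_after_letter_subst[OF assms(1)] \<open>?y \<in> lists \<Sigma>\<close> assms(3,4) by blast
next
  case False
  have "morph (letter_subst p x) [p] = morph (letter_subst p x) x"
    using False morph_letter_subst_notin[of p x x] by (simp add: letter_subst_def)
  moreover have "[p] \<in> lists \<Sigma>"
    using assms(2) by simp
  ultimately show ?thesis
    using RCP1_head_after_letter_subst[OF assms(1,3) _ assms(3) _ assms(5,4)] by blast
qed

lemma RCP1_head_of_word:
  assumes "RCP1 \<Sigma> f" and "p \<in> \<Sigma>" and "q \<in> \<Sigma>" and "p \<noteq> q" and "b \<noteq> p" and "b \<noteq> q"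
    and "f [p] = b # s" and "f [q] = b # s'"
  shows "x \<in> lists \<Sigma> \<Longrightarrow> \<exists>t. f x = b # t"
proof (induction "length x" arbitrary: x rule: less_induct)
  case less
  have "\<exists>t. f x = b # t \<or> f x = p # t" "\<exists>t. f x = b # t \<or> f x = q # t"
    using RCP1_head_of_word_step[OF assms(1) _ less.prems] less.hyps assms(2,3,5-8) by blast+
  then show ?case
    using assms(4) by auto
qed

theorem mainTheorem8:
  fixes \<Sigma> :: "'a set" and f :: "'a list \<Rightarrow> 'a list" and a b :: 'a
  assumes "finite \<Sigma>" and "card \<Sigma> \<ge> 3"
    and "\<forall>w\<in>lists \<Sigma>. f w \<in> lists \<Sigma>"
    and "RCP1 \<Sigma> f"
    and "a \<in> \<Sigma>" and "b \<in> \<Sigma>" and "a \<noteq> b"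
    and "\<exists>s. f [a] = b # s"
  shows "\<forall>x\<in>lists \<Sigma>. \<exists>s. f x = b # s"
proof -
  obtain s where fa: "f [a] = b # s"
    using assms(8) by blast
  have "card (\<Sigma> - {a, b}) > 0"
    using assms(1,2,5-7) by (simp add: card_Diff_subset)
  then obtain c where c: "c \<in> \<Sigma>" "c \<noteq> a" "c \<noteq> b"
    by (metis Diff_iff card_gt_0_iff ex_in_conv insertCI)
  obtain s' where "f [c] = b # s'"
    using RCP1_head_of_letter[OF assms(4,5) c(1) assms(7) c(2,3) fa] by blast
  then show ?thesis
    using RCP1_head_of_word[OF assms(4,5) c(1)] c(2,3) assms(7) fa by auto
qed

end
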